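(* Let $n$ be a positive integer with prime factorisation $n=2^{k_0}p_1^{k_1}\cdots p_r^{k_r}$, where $p_1,\dots,p_r$ are distinct odd primes, $k_0\geq 0$ and $k_1,\dots,k_r\geq 1$. Then \[ t_{\mathrm{aff}}(n)=n-\sum_{\substack{0\leq m_i\leq k_i\\ i=0,\ldots,r}}\frac{\varphi(2^{m_0})\varphi(p_1^{m_1})\cdots\varphi(p_r^{m_r})}{\operatorname{lcm}\{\lambda(2^{m_0}),\varphi(p_1^{m_1}),\ldots,\varphi(p_r^{m_r})\}}. \]
   Context: $S(\mathbb{Z}_n)$ is the set of bijections $\mathbb{Z}_n\to\mathbb{Z}_n$. For $\pi\in S(\mathbb{Z}_n)$, $\mathrm{cyc}(\pi)$ is the number of cycles (including fixed points) of $\pi$, $t(\pi)=n-\mathrm{cyc}(\pi)$, $[\pi]=\{x\mapsto \pi(x+b): b\in\mathbb{Z}_n\}$ and $t([\pi])=\min_{\sigma\in[\pi]}t(\sigma)$. A permutation is affine if it has the form $x\mapsto ax+b$ with $a\in\mathbb{Z}_n^\times$, $b\in\mathbb{Z}_n$, and $t_{\mathrm{aff}}(n)=\max\{t([\pi]):\pi\in S(\mathbb{Z}_n)\text{ affine}\}$. $\varphi$ is Euler's totient function ($\varphi(1)=1$), and $\lambda(2^m)$ is the maximum order of an element of $\mathbb{Z}_{2^m}^\times$: $\lambda(2^m)=\varphi(2^m)$ for $m\leq 2$ and $\lambda(2^m)=\varphi(2^m)/2$ for $m\geq 3$. *)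

theory Defs
  imports "HOL-Number_Theory.Number_Theory" "HOL-Library.FuncSet"
begin

text \<open>Z_n is modelled as {0..<n} with arithmetic mod n; a permutation of Z_n
  is a function nat => nat restricted to {0..<n}.\<close>

definition orbit_of :: "(nat \<Rightarrow> nat) \<Rightarrow> nat \<Rightarrow> nat set" where
  "orbit_of \<pi> x = {(\<pi> ^^ k) x | k. True}"

definition cyc :: "nat \<Rightarrow> (nat \<Rightarrow> nat) \<Rightarrow> nat" where
  "cyc n \<pi> = card (orbit_of \<pi> ` {0..<n})"

definition t_perm :: "nat \<Rightarrow> (nat \<Rightarrow> nat) \<Rightarrow> nat" where
  "t_perm n \<pi> = n - cyc n \<pi>"

definition shift_class :: "nat \<Rightarrow> (nat \<Rightarrow> nat) \<Rightarrow> (nat \<Rightarrow> nat) set" where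
  "shift_class n \<pi> = {(\<lambda>x. \<pi> ((x + b) mod n)) | b. b < n}"

definition t_class :: "nat \<Rightarrow> (nat \<Rightarrow> nat) \<Rightarrow> nat" where
  "t_class n \<pi> = Min (t_perm n ` shift_class n \<pi>)"

definition affine_perms :: "nat \<Rightarrow> (nat \<Rightarrow> nat) set" where
  "affine_perms n = {(\<lambda>x. (a * x + b) mod n) | a b. a < n \<and> b < n \<and> coprime a n}"

definition t_aff :: "nat \<Rightarrow> nat" where
  "t_aff n = Max (t_class n ` affine_perms n)"

definition lambda2 :: "nat \<Rightarrow> nat" where
  "lambda2 m = (if m \<le> 2 then totient (2 ^ m) else totient (2 ^ m) div 2)"

text \<open>The entry of the lcm belonging to prime p with exponent m:
  lambda(2^m) for p = 2, phi(p^m) for odd p.\<close>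
definition lcm_entry :: "nat \<Rightarrow> nat \<Rightarrow> nat" where
  "lcm_entry p m = (if p = 2 then lambda2 m else totient (p ^ m))"

end

theory Submission
  imports Defs "HOL-Combinatorics.Cycles"
begin

(* Shifting the argument of x \<mapsto> a x + b only changes b, so the shift class of an affine map
   consists of the maps x \<mapsto> a x + b' and t([x \<mapsto> a x + b]) = n - max_b' cyc(x \<mapsto> a x + b').
   By Burnside's lemma for the cyclic group generated by a permutation, its number of cycles is
   the average number of fixed points of its powers; the fixed points of x \<mapsto> a^k x + c are
   either none or a translate of those of x \<mapsto> a^k x, so the maximum is attained at b' = 0.
   Under x \<mapsto> a x the orbit of x has length ord_d(a) \<le> \<lambda>(d) with d = n / gcd(x, n), and the
   Chinese remainder theorem together with primitive roots modulo odd prime powers (and 3 modulo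
   powers of 2) yields a unit a with ord_d(a) = \<lambda>(d) for every divisor d of n simultaneously.
   Hence t_aff(n) = n - \<Sum>_{x<n} 1 / \<lambda>(n / gcd(x, n)) = n - \<Sum>_{d | n} \<phi>(d) / \<lambda>(d), and writing
   d = \<Prod> p^(m_p), with \<phi> multiplicative and \<lambda>(d) = lcm \<lambda>(p^(m_p)), gives the formula. *)

section \<open>Orbits of a periodic map\<close>

lemma funpow_in_set: "\<pi> ` S \<subseteq> S \<Longrightarrow> x \<in> S \<Longrightarrow> (\<pi> ^^ k) x \<in> S"
  by (induction k) auto

lemma funpow_cong_on:
  assumes "\<And>x. x \<in> S \<Longrightarrow> \<sigma> x = \<tau> x" "\<tau> ` S \<subseteq> S" "x \<in> S"
  shows "(\<sigma> ^^ k) x = (\<tau> ^^ k) x"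
  using assms funpow_in_set[OF assms(2,3)] by (induction k) auto

lemma bij_betw_funpow_periodic:
  assumes "finite S" "bij_betw \<pi> S S"
  obtains L where "0 < L" "\<forall>x\<in>S. (\<pi> ^^ L) x = x"
proof -
  define \<sigma> where "\<sigma> x = (if x \<in> S then \<pi> x else x)" for x
  have "\<sigma> permutes S"
    using assms(2) by (intro bij_imp_permutes) (auto simp: \<sigma>_def cong: bij_betw_cong)
  then obtain L where L: "\<sigma> ^^ L = id" "0 < L"
    using permutation_is_nilpotent permutes_imp_permutation[OF assms(1)] by metis
  have "(\<sigma> ^^ k) x = (\<pi> ^^ k) x" if "x \<in> S" for x k
    using funpow_cong_on[of S \<sigma> \<pi>] bij_betw_imp_surj_on[OF assms(2)] that by (simp add: \<sigma>_def)
  then show thesis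
    using that L by (metis id_apply)
qed

lemma funpow_eq_self_iff_least_power_dvd:
  assumes "(\<pi> ^^ L) x = x" "0 < L"
  shows "(\<pi> ^^ k) x = x \<longleftrightarrow> least_power \<pi> x dvd k"
proof
  assume "least_power \<pi> x dvd k"
  then show "(\<pi> ^^ k) x = x"
    using funpow_mod_eq[OF least_powerI(1)[OF assms], of k] by simp
qed (rule least_power_minimal)

lemma card_multiples_below:
  assumes "0 < p" "p dvd L"
  shows "card {k \<in> {..<L}. p dvd k} = L div p"
proof -
  have "{k \<in> {..<L}. p dvd k} = (\<lambda>j. p * j) ` {..<L div p}"
    using assms by (auto elim!: dvdE)
  then show ?thesis
    using assms by (simp add: card_image inj_on_def)
qed

lemma orbit_of_eq_image_least_power:
  assumes "(\<pi> ^^ L) x = x" "0 < L"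
  shows "orbit_of \<pi> x = (\<lambda>k. (\<pi> ^^ k) x) ` {..<least_power \<pi> x}"
proof -
  have "(\<pi> ^^ k) x \<in> (\<lambda>k. (\<pi> ^^ k) x) ` {..<least_power \<pi> x}" for k
    using funpow_mod_eq[OF least_powerI(1)[OF assms], of k] least_powerI(2)[OF assms]
    by (metis imageI lessThan_iff mod_less_divisor)
  then show ?thesis
    unfolding orbit_of_def by auto
qed

lemma card_orbit_of:
  assumes "(\<pi> ^^ L) x = x" "0 < L"
  shows "card (orbit_of \<pi> x) = least_power \<pi> x"
proof -
  let ?p = "least_power \<pi> x"
  have "False" if "i < j" "j < ?p" "(\<pi> ^^ i) x = (\<pi> ^^ j) x" for i j
  proof -
    have "(\<pi> ^^ (?p - j + i)) x = (\<pi> ^^ (?p - j + j)) x"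
      using that(3) by (simp add: funpow_add)
    also have "\<dots> = x"
      using that(2) least_powerI(1)[OF assms] by simp
    finally show False
      using least_power_le[where f=\<pi> and n="?p - j + i" and x=x] that by simp
  qed
  then have "inj_on (\<lambda>k. (\<pi> ^^ k) x) {..<?p}"
    unfolding inj_on_def by (metis lessThan_iff linorder_neqE_nat)
  then show ?thesis
    by (simp add: orbit_of_eq_image_least_power[OF assms] card_image)
qed

lemma self_in_orbit_of: "x \<in> orbit_of \<pi> x"
  unfolding orbit_of_def by (metis (mono_tags) funpow_0 mem_Collect_eq)

lemma orbit_of_subset: "y \<in> orbit_of \<pi> x \<Longrightarrow> orbit_of \<pi> y \<subseteq> orbit_of \<pi> x"
  unfolding orbit_of_def by (auto simp: funpow_add[symmetric, THEN fun_cong, simplified])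

lemma orbit_of_eq:
  assumes "(\<pi> ^^ L) x = x" "0 < L" "y \<in> orbit_of \<pi> x"
  shows "orbit_of \<pi> y = orbit_of \<pi> x"
proof -
  obtain j where y: "y = (\<pi> ^^ j) x"
    using assms(3) unfolding orbit_of_def by blast
  have "(\<pi> ^^ (L * j - j)) y = (\<pi> ^^ (L * j - j + j)) x"
    using y by (simp add: funpow_add)
  also have "\<dots> = (\<pi> ^^ (L * j)) x"
    using assms(2) by simp
  also have "\<dots> = x"
    using funpow_mod_eq[OF assms(1), of "L * j"] by simp
  finally have "x \<in> orbit_of \<pi> y"
    unfolding orbit_of_def by blast
  then show ?thesis
    using orbit_of_subset[OF assms(3)] orbit_of_subset by blast
qed

lemma card_image_eq_sum_inverse_card:
  assumes "finite S"
    and "\<And>x. x \<in> S \<Longrightarrow> x \<in> C x \<and> C x \<subseteq> S"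
    and "\<And>x y. x \<in> S \<Longrightarrow> y \<in> C x \<Longrightarrow> C y = C x"
  shows "real (card (C ` S)) = (\<Sum>x\<in>S. 1 / real (card (C x)))"
proof -
  have "(\<Sum>x\<in>S. 1 / real (card (C x))) =
      (\<Sum>Q\<in>C ` S. \<Sum>x\<in>{x\<in>S. C x = Q}. 1 / real (card (C x)))"
    using assms(1) by (rule sum.image_gen)
  also have "\<dots> = (\<Sum>Q\<in>C ` S. 1)"
  proof (rule sum.cong[OF refl])
    fix Q assume "Q \<in> C ` S"
    then obtain y where y: "y \<in> S" "Q = C y" by blast
    have fibre: "{x\<in>S. C x = Q} = C y"
      using assms(2,3) y by blast
    have "finite (C y)" "C y \<noteq> {}"
      using assms(1,2) y(1) finite_subset by blast+
    moreover have "(\<Sum>x\<in>C y. 1 / real (card (C x))) = (\<Sum>x\<in>C y. 1 / real (card (C y)))"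
      using assms(3)[OF y(1)] by (metis (no_types, lifting) sum.cong)
    ultimately show "(\<Sum>x\<in>{x\<in>S. C x = Q}. 1 / real (card (C x))) = 1"
      using fibre y(2) by simp
  qed
  finally show ?thesis by simp
qed

lemma card_orbits_eq_sum:
  assumes "finite S" "\<pi> ` S \<subseteq> S" "0 < L" "\<forall>x\<in>S. (\<pi> ^^ L) x = x"
  shows "real (card (orbit_of \<pi> ` S)) = (\<Sum>x\<in>S. 1 / real (card (orbit_of \<pi> x)))"
proof (rule card_image_eq_sum_inverse_card[OF assms(1)])
  fix x assume x: "x \<in> S"
  show "x \<in> orbit_of \<pi> x \<and> orbit_of \<pi> x \<subseteq> S"
    using self_in_orbit_of funpow_in_set[OF assms(2) x] unfolding orbit_of_def by blast
  fix y assume "y \<in> orbit_of \<pi> x"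
  then show "orbit_of \<pi> y = orbit_of \<pi> x"
    using orbit_of_eq assms(3,4) x by blast
qed

theorem burnside_funpow:
  assumes "finite S" "\<pi> ` S \<subseteq> S" "0 < L" "\<forall>x\<in>S. (\<pi> ^^ L) x = x"
  shows "real L * real (card (orbit_of \<pi> ` S)) = (\<Sum>k<L. real (card {x\<in>S. (\<pi> ^^ k) x = x}))"
proof -
  have "(\<Sum>k<L. real (card {x\<in>S. (\<pi> ^^ k) x = x})) =
      (\<Sum>k<L. \<Sum>x\<in>S. if (\<pi> ^^ k) x = x then 1 else 0)"
    using assms(1) by (simp add: sum.If_cases Int_def)
  also have "\<dots> = (\<Sum>x\<in>S. \<Sum>k<L. if (\<pi> ^^ k) x = x then 1 else 0)"
    by (rule sum.swap)
  also have "\<dots> = (\<Sum>x\<in>S. \<Sum>k<L. if least_power \<pi> x dvd k then 1 else 0)"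
    using funpow_eq_self_iff_least_power_dvd[OF bspec[OF assms(4)] assms(3)] by (intro sum.cong refl) auto
  also have "\<dots> = (\<Sum>x\<in>S. real (card {k\<in>{..<L}. least_power \<pi> x dvd k}))"
    by (simp add: sum.If_cases Int_def)
  also have "\<dots> = (\<Sum>x\<in>S. real L * (1 / real (card (orbit_of \<pi> x))))"
  proof (rule sum.cong[OF refl])
    fix x assume "x \<in> S"
    then have x: "(\<pi> ^^ L) x = x"
      using assms(4) by blast
    have "least_power \<pi> x dvd L"
      by (rule least_power_minimal[OF x])
    then show "real (card {k\<in>{..<L}. least_power \<pi> x dvd k}) =
        real L * (1 / real (card (orbit_of \<pi> x)))"
      using card_multiples_below[OF least_powerI(2)[OF x assms(3)]]
      by (simp add: card_orbit_of[OF x assms(3)] real_of_nat_div)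
  qed
  also have "\<dots> = real L * real (card (orbit_of \<pi> ` S))"
    using card_orbits_eq_sum[OF assms] by (simp add: sum_distrib_left)
  finally show ?thesis ..
qed

lemma cyc_eq_card_orbits: "cyc n \<pi> = card (orbit_of \<pi> ` {..<n})"
  by (simp add: cyc_def atLeast0LessThan)

lemma cyc_le: "cyc n \<pi> \<le> n"
  unfolding cyc_def using card_image_le[of "{0..<n}" "orbit_of \<pi>"] by simp

section \<open>Affine maps modulo n\<close>

definition affine_map :: "nat \<Rightarrow> nat \<Rightarrow> nat \<Rightarrow> nat \<Rightarrow> nat" where
  "affine_map n a b x = (a * x + b) mod n"

lemma affine_perms_eq: "affine_perms n = {affine_map n a b | a b. a < n \<and> b < n \<and> coprime a n}"
  by (simp add: affine_perms_def affine_map_def[abs_def])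

lemma affine_map_less: "0 < n \<Longrightarrow> affine_map n a b x < n"
  by (simp add: affine_map_def)

lemma bij_betw_affine_map:
  assumes "coprime a n"
  shows "bij_betw (affine_map n a b) {..<n} {..<n}"
proof -
  have "inj_on (affine_map n a b) {..<n}"
  proof (rule inj_onI)
    fix x y assume "x \<in> {..<n}" "y \<in> {..<n}" "affine_map n a b x = affine_map n a b y"
    then have "[a * x + b = a * y + b] (mod n)" "x < n" "y < n"
      by (auto simp: affine_map_def cong_def)
    then show "x = y"
      using assms
      by (simp add: cong_add_rcancel_nat cong_mult_lcancel_nat coprime_commute cong_less_modulus_unique_nat)
  qed
  moreover have "affine_map n a b ` {..<n} \<subseteq> {..<n}"
    using affine_map_less by fastforce
  ultimately show ?thesis
    by (simp add: bij_betw_def endo_inj_surj)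
qed

lemma funpow_affine_map:
  assumes "x < n"
  shows "(affine_map n a b ^^ k) x = affine_map n (a ^ k) (b * (\<Sum>i<k. a ^ i)) x"
proof (induction k)
  case 0
  show ?case
    using assms by (simp add: affine_map_def)
next
  case (Suc k)
  have geometric: "(\<Sum>i<Suc k. a ^ i) = 1 + a * (\<Sum>i<k. a ^ i)"
    by (simp add: sum.lessThan_Suc_shift sum_distrib_left del: sum.lessThan_Suc)
  have "(affine_map n a b ^^ Suc k) x = affine_map n a b (affine_map n (a ^ k) (b * (\<Sum>i<k. a ^ i)) x)"
    using Suc by simp
  also have "\<dots> = (a * ((a ^ k * x + b * (\<Sum>i<k. a ^ i)) mod n) + b) mod n"
    by (simp add: affine_map_def)
  also have "\<dots> = (a * (a ^ k * x + b * (\<Sum>i<k. a ^ i)) + b) mod n"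
    by (metis mod_add_left_eq mod_mult_right_eq)
  also have "\<dots> = affine_map n (a ^ Suc k) (b * (\<Sum>i<Suc k. a ^ i)) x"
    by (simp add: affine_map_def geometric algebra_simps del: sum.lessThan_Suc)
  finally show ?case .
qed

lemma affine_map_eq_self_iff:
  assumes "x < n"
  shows "affine_map n a b x = x \<longleftrightarrow> int n dvd int a * int x + int b - int x"
proof -
  have "affine_map n a b x = x \<longleftrightarrow> int (a * x + b) mod int n = int x mod int n"
    using assms unfolding affine_map_def by (metis mod_less of_nat_eq_iff of_nat_mod)
  then show ?thesis
    by (simp add: mod_eq_dvd_iff)
qed

lemma affine_map_fixed_point_diff:
  assumes "x0 < n" "affine_map n a c x0 = x0" "x < n" "affine_map n a c x = x"
  shows "affine_map n a 0 ((x + (n - x0)) mod n) = (x + (n - x0)) mod n"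
proof -
  define z where "z = (x + (n - x0)) mod n"
  have "int z = (int x - int x0 + int n) mod int n"
    using assms(1) by (simp add: z_def of_nat_mod of_nat_diff algebra_simps)
  then have "int n dvd int z - (int x - int x0)"
    by (simp add: mod_eq_dvd_iff[symmetric])
  moreover have "int n dvd int a * int x + int c - int x" "int n dvd int a * int x0 + int c - int x0"
    using assms affine_map_eq_self_iff by auto
  ultimately have "int n dvd (int a - 1) * (int z - (int x - int x0)) +
      ((int a * int x + int c - int x) - (int a * int x0 + int c - int x0))"
    by (metis dvd_add dvd_diff dvd_mult)
  moreover have "z < n"
    using assms(1) by (simp add: z_def)
  ultimately show ?thesis
    using affine_map_eq_self_iff[of z n a 0] by (simp add: z_def algebra_simps)
qed

lemma card_fixed_points_affine_map_le:
  "card {x\<in>{..<n}. affine_map n a c x = x} \<le> card {x\<in>{..<n}. affine_map n a 0 x = x}"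
proof (cases "\<exists>x0<n. affine_map n a c x0 = x0")
  case True
  then obtain x0 where x0: "x0 < n" "affine_map n a c x0 = x0"
    by blast
  have "{x\<in>{..<n}. affine_map n a c x = x} \<subseteq>
      (\<lambda>z. (z + x0) mod n) ` {x\<in>{..<n}. affine_map n a 0 x = x}"
  proof
    fix x assume x: "x \<in> {x\<in>{..<n}. affine_map n a c x = x}"
    have "(((x + (n - x0)) mod n) + x0) mod n = x"
      using x x0(1) by (simp add: mod_add_left_eq)
    then show "x \<in> (\<lambda>z. (z + x0) mod n) ` {x\<in>{..<n}. affine_map n a 0 x = x}"
      using affine_map_fixed_point_diff[OF x0] x x0(1)
      by (intro image_eqI[of _ _ "(x + (n - x0)) mod n"]) auto
  qed
  then have "card {x\<in>{..<n}. affine_map n a c x = x} \<le>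
      card ((\<lambda>z. (z + x0) mod n) ` {x\<in>{..<n}. affine_map n a 0 x = x})"
    by (intro card_mono) auto
  also have "\<dots> \<le> card {x\<in>{..<n}. affine_map n a 0 x = x}"
    by (rule card_image_le) simp
  finally show ?thesis .
next
  case False
  then have "{x\<in>{..<n}. affine_map n a c x = x} = {}"
    by auto
  then show ?thesis
    by (metis card.empty zero_le)
qed

lemma cyc_affine_map_le:
  assumes "coprime a n"
  shows "cyc n (affine_map n a b) \<le> cyc n (affine_map n a 0)"
proof (cases "n = 0")
  case False
  let ?f = "affine_map n a b" and ?g = "affine_map n a 0"
  have maps_to: "?f ` {..<n} \<subseteq> {..<n}" "?g ` {..<n} \<subseteq> {..<n}"
    using False affine_map_less by auto
  obtain L where L: "0 < L" "\<forall>x\<in>{..<n}. (?f ^^ L) x = x"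
    using bij_betw_funpow_periodic[OF finite_lessThan bij_betw_affine_map[OF assms]] by blast
  \<comment> \<open>evaluating ?f ^^ L at 0 shows that its translation part vanishes, so L is a period of ?g too\<close>
  have "(b * (\<Sum>i<L. a ^ i)) mod n = 0"
    using L(2) funpow_affine_map[where x=0 and n=n and a=a and b=b and k=L] False by (simp add: affine_map_def)
  then have "\<forall>x\<in>{..<n}. (?g ^^ L) x = (?f ^^ L) x"
    by (simp add: funpow_affine_map affine_map_def mod_add_right_eq[symmetric, of _ "b * _"])
  with L(2) have gL: "\<forall>x\<in>{..<n}. (?g ^^ L) x = x"
    by simp
  have fix_le: "card {x\<in>{..<n}. (?f ^^ k) x = x} \<le> card {x\<in>{..<n}. (?g ^^ k) x = x}" for k
    using card_fixed_points_affine_map_le[of n "a ^ k" "b * (\<Sum>i<k. a ^ i)"]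
    by (simp add: funpow_affine_map cong: conj_cong)
  have "real L * real (cyc n ?f) \<le> real L * real (cyc n ?g)"
    unfolding cyc_eq_card_orbits burnside_funpow[OF finite_lessThan maps_to(1) L]
      burnside_funpow[OF finite_lessThan maps_to(2) L(1) gL]
    using fix_le by (intro sum_mono) simp
  then show ?thesis
    using L(1) by simp
qed (simp add: cyc_def)

lemma t_class_affine_map:
  assumes "0 < n" "coprime a n"
  shows "t_class n (affine_map n a b) = n - cyc n (affine_map n a 0)"
proof -
  have shift: "(\<lambda>x. affine_map n a b ((x + c) mod n)) = affine_map n a ((a * c + b) mod n)" for c
  proof
    fix x
    have "(a * ((x + c) mod n) + b) mod n = (a * (x + c) + b) mod n"
      by (metis mod_add_left_eq mod_mult_right_eq)
    then show "affine_map n a b ((x + c) mod n) = affine_map n a ((a * c + b) mod n) x"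
      by (simp add: affine_map_def mod_add_right_eq algebra_simps)
  qed
  have shift_class: "shift_class n (affine_map n a b) = (\<lambda>c. affine_map n a ((a * c + b) mod n)) ` {..<n}"
    unfolding shift_class_def shift by auto
  obtain c0 where c0: "c0 < n" "affine_map n a b c0 = 0"
    using bij_betw_imp_surj_on[OF bij_betw_affine_map[OF assms(2), of b]] assms(1)
    by (metis imageE lessThan_iff)
  show ?thesis
    unfolding t_class_def shift_class image_image
  proof (rule Min_eqI)
    fix y assume "y \<in> (\<lambda>c. t_perm n (affine_map n a ((a * c + b) mod n))) ` {..<n}"
    then show "n - cyc n (affine_map n a 0) \<le> y"
      using cyc_affine_map_le[OF assms(2)] by (auto simp: t_perm_def diff_le_mono2)
  next
    show "n - cyc n (affine_map n a 0) \<in> (\<lambda>c. t_perm n (affine_map n a ((a * c + b) mod n))) ` {..<n}"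
      using c0 by (auto simp: t_perm_def affine_map_def intro!: image_eqI[of _ _ c0])
  qed simp
qed

lemma cong_mult_right_iff_div_gcd:
  fixes u v x n :: nat
  assumes "0 < n"
  shows "[u * x = v * x] (mod n) \<longleftrightarrow> [u = v] (mod n div gcd x n)"
proof -
  let ?g = "gcd x n"
  obtain x' d where xd: "x = x' * ?g" "n = d * ?g" "coprime x' d"
    using gcd_coprime_exists[of x n] assms by auto
  have "0 < ?g"
    using assms by simp
  then have d: "n div ?g = d"
    using xd(2) by (metis nonzero_mult_div_cancel_right neq0_conv)
  have "[u * x = v * x] (mod n) \<longleftrightarrow> [(u * x') * ?g = (v * x') * ?g] (mod d * ?g)"
    using xd by (simp add: mult.assoc)
  also have "\<dots> \<longleftrightarrow> [u * x' = v * x'] (mod d)"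
    using assms by (simp add: cong_def mod_mult_mult2)
  also have "\<dots> \<longleftrightarrow> [u = v] (mod d)"
    using xd(3) by (rule cong_mult_rcancel_nat)
  finally show ?thesis
    unfolding d .
qed

lemma card_orbit_of_linear_map:
  assumes "coprime a n" "x < n"
  shows "card (orbit_of (affine_map n a 0) x) = ord (n div gcd x n) a"
proof -
  let ?g = "affine_map n a 0"
  obtain L where L: "0 < L" "\<forall>x\<in>{..<n}. (?g ^^ L) x = x"
    using bij_betw_funpow_periodic[OF finite_lessThan bij_betw_affine_map[OF assms(1)]] by blast
  have x: "(?g ^^ L) x = x"
    using L(2) assms(2) by blast
  have "(?g ^^ k) x = x \<longleftrightarrow> ord (n div gcd x n) a dvd k" for k
  proof -
    have "(?g ^^ k) x = x \<longleftrightarrow> [a ^ k * x = 1 * x] (mod n)"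
      using assms(2) by (simp add: funpow_affine_map affine_map_def cong_def)
    also have "\<dots> \<longleftrightarrow> [a ^ k = 1] (mod n div gcd x n)"
      using assms(2) by (intro cong_mult_right_iff_div_gcd) simp
    finally show ?thesis
      by (simp add: ord_divides')
  qed
  then have "least_power ?g x = ord (n div gcd x n) a"
    using funpow_eq_self_iff_least_power_dvd[OF x L(1)] by (metis dvd_antisym dvd_refl)
  then show ?thesis
    using card_orbit_of[OF x L(1)] by simp
qed

lemma cyc_linear_map_eq_sum:
  assumes "coprime a n"
  shows "real (cyc n (affine_map n a 0)) = (\<Sum>x<n. 1 / real (ord (n div gcd x n) a))"
proof (cases "n = 0")
  case False
  let ?g = "affine_map n a 0"
  have maps_to: "?g ` {..<n} \<subseteq> {..<n}"
    using False affine_map_less by auto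
  obtain L where L: "0 < L" "\<forall>x\<in>{..<n}. (?g ^^ L) x = x"
    using bij_betw_funpow_periodic[OF finite_lessThan bij_betw_affine_map[OF assms]] by blast
  show ?thesis
    unfolding cyc_eq_card_orbits card_orbits_eq_sum[OF finite_lessThan maps_to L]
    using card_orbit_of_linear_map[OF assms] by simp
qed (simp add: cyc_def)

section \<open>Units of maximal order modulo every divisor\<close>

lemma ord_le_Carmichael:
  assumes "0 < d" "coprime a d"
  shows "ord d a \<le> Carmichael d"
proof (cases "d = 1")
  case False
  then show ?thesis
    using assms ord_dvd_Carmichael[of d a] by (intro dvd_imp_le) (auto simp: coprime_commute)
qed simp

lemma Carmichael_root_prime_powers_exists:
  assumes "prime p"
  shows "\<exists>g. \<forall>m. ord (p ^ m) g = Carmichael (p ^ m)"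
proof (cases "p = 2")
  case True
  have "ord (2 ^ m) (3::nat) = Carmichael (2 ^ m)" for m
  proof -
    consider "m = 0" | "m = 1" | "m = 2" | "m \<ge> 3"
      by linarith
    then show ?thesis
      by cases (auto simp: ord_eq_Suc_0_iff cong_def ord_twopow_3_5 Carmichael_twopow_ge_8)
  qed
  then show ?thesis
    using True by blast
next
  case False
  then have "odd p"
    using assms primes_dvd_imp_eq two_is_prime_nat by blast
  then obtain g where g: "\<forall>k>0. residue_primroot (p ^ k) g"
    using residue_primroot_odd_prime_power_exists[OF assms] by metis
  have "ord (p ^ m) g = Carmichael (p ^ m)" for m
    using g residue_primroot_Carmichael[of "p ^ m" g]
    by (cases "m = 0") (auto simp: residue_primroot_def)
  then show ?thesis
    by blast
qed

lemma coprime_prime_powers: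
  fixes p q :: nat
  assumes "prime p" "prime q" "p \<noteq> q"
  shows "coprime (p ^ i) (q ^ j)"
  using primes_coprime[OF assms] by simp

lemma ord_eq_Carmichael_if_prime_powers:
  fixes d x :: nat
  assumes "0 < d"
    and "\<And>p. p \<in> prime_factors d \<Longrightarrow> ord (p ^ multiplicity p d) x = Carmichael (p ^ multiplicity p d)"
  shows "ord d x = Carmichael d"
proof -
  define Q where "Q = prime_factors d"
  have d: "d = (\<Prod>p\<in>Q. p ^ multiplicity p d)"
    unfolding Q_def using assms(1) by (rule prime_factorization_nat)
  have cop: "\<And>p q. p \<in> Q \<Longrightarrow> q \<in> Q \<Longrightarrow> p \<noteq> q \<Longrightarrow>
      coprime (p ^ multiplicity p d) (q ^ multiplicity q d)"
    using coprime_prime_powers in_prime_factors_imp_prime unfolding Q_def by blast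
  have "ord d x = (LCM p\<in>Q. Carmichael (p ^ multiplicity p d))"
    using assms(2) by (subst d, subst ord_modulus_prod_coprime) (use cop in \<open>auto simp: Q_def\<close>)
  also have "\<dots> = Carmichael d"
    by (subst (2) d, rule Carmichael_prod_coprime[symmetric]) (use cop in \<open>auto simp: Q_def\<close>)
  finally show ?thesis .
qed

lemma Carmichael_root_divisors_exists:
  assumes "0 < n"
  obtains a where "a < n" "coprime a n" "\<And>d. d dvd n \<Longrightarrow> ord d a = Carmichael d"
proof -
  define P where "P = prime_factors n"
  have "\<forall>p\<in>P. \<exists>g. \<forall>m. ord (p ^ m) g = Carmichael (p ^ m)"
    using Carmichael_root_prime_powers_exists by (simp add: P_def in_prime_factors_iff)
  then obtain g where g: "\<And>p m. p \<in> P \<Longrightarrow> ord (p ^ m) (g p) = Carmichael (p ^ m)"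
    by metis
  have "\<exists>x. \<forall>p\<in>P. [x = g p] (mod p ^ multiplicity p n)"
    by (rule chinese_remainder_nat) (auto simp: P_def in_prime_factors_iff primes_coprime)
  then obtain x where x: "\<And>p. p \<in> P \<Longrightarrow> [x = g p] (mod p ^ multiplicity p n)"
    by blast
  have ord_x: "ord d x = Carmichael d" if "d dvd n" for d
  proof (rule ord_eq_Carmichael_if_prime_powers)
    show "0 < d"
      using that assms dvd_pos_nat by blast
    fix p assume "p \<in> prime_factors d"
    then have p: "p \<in> P" "multiplicity p d \<le> multiplicity p n"
      using that assms dvd_prime_factors[of n d] dvd_imp_multiplicity_le[of d n p] by (auto simp: P_def)
    then have "[x = g p] (mod p ^ multiplicity p d)"
      using x le_imp_power_dvd cong_dvd_modulus_nat by blast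
    then have "ord (p ^ multiplicity p d) x = ord (p ^ multiplicity p d) (g p)"
      by (rule ord_cong)
    also have "\<dots> = Carmichael (p ^ multiplicity p d)"
      using g p(1) by blast
    finally show "ord (p ^ multiplicity p d) x = Carmichael (p ^ multiplicity p d)" .
  qed
  show thesis
  proof
    show "x mod n < n"
      using assms by simp
    show "coprime (x mod n) n"
      using ord_x[of n] ord_eq_0[of n x] assms by (simp add: coprime_commute)
    fix d assume "d dvd n"
    then show "ord d (x mod n) = Carmichael d"
      using ord_x ord_cong[of "x mod n" x d] by (simp add: cong_def mod_mod_cancel)
  qed
qed

lemma div_gcd_dvd: "n div gcd x n dvd (n::nat)"
  by (metis dvd_div_mult_self dvd_triv_left gcd_dvd2)

lemma cyc_linear_map_ge:
  assumes "0 < n" "coprime a n"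
  shows "(\<Sum>x<n. 1 / real (Carmichael (n div gcd x n))) \<le> real (cyc n (affine_map n a 0))"
  unfolding cyc_linear_map_eq_sum[OF assms(2)]
proof (rule sum_mono)
  fix x
  let ?d = "n div gcd x n"
  have "0 < ?d" "coprime a ?d"
    using assms div_gcd_dvd[of n x] by (auto intro: dvd_pos_nat coprime_imp_coprime dvd_trans)
  then have "ord ?d a \<le> Carmichael ?d" "0 < ord ?d a"
    using ord_le_Carmichael ord_eq_0[of ?d a] by (auto simp: coprime_commute)
  then show "1 / real (Carmichael ?d) \<le> 1 / real (ord ?d a)"
    by (intro divide_left_mono) auto
qed

lemma cyc_linear_map_Carmichael_root:
  assumes "coprime a n" "\<And>d. d dvd n \<Longrightarrow> ord d a = Carmichael d"
  shows "real (cyc n (affine_map n a 0)) = (\<Sum>x<n. 1 / real (Carmichael (n div gcd x n)))"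
  using assms div_gcd_dvd by (simp add: cyc_linear_map_eq_sum)

lemma t_aff_eq_sum_inverse_Carmichael:
  assumes "0 < n"
  shows "real (t_aff n) = real n - (\<Sum>x<n. 1 / real (Carmichael (n div gcd x n)))"
proof -
  obtain a0 where a0: "a0 < n" "coprime a0 n" "\<And>d. d dvd n \<Longrightarrow> ord d a0 = Carmichael d"
    using Carmichael_root_divisors_exists[OF assms] by blast
  let ?c0 = "cyc n (affine_map n a0 0)"
  have "t_aff n = n - ?c0"
    unfolding t_aff_def
  proof (rule Max_eqI)
    have "affine_perms n \<subseteq> (\<lambda>(a, b). affine_map n a b) ` ({..<n} \<times> {..<n})"
      unfolding affine_perms_eq by auto
    then show "finite (t_class n ` affine_perms n)"
      by (meson finite_SigmaI finite_imageI finite_lessThan finite_subset)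
  next
    fix y assume "y \<in> t_class n ` affine_perms n"
    then obtain a b where "coprime a n" "y = n - cyc n (affine_map n a 0)"
      unfolding affine_perms_eq using t_class_affine_map[OF assms] by auto
    moreover from this have "real ?c0 \<le> real (cyc n (affine_map n a 0))"
      using cyc_linear_map_ge[OF assms] cyc_linear_map_Carmichael_root[OF a0(2,3)] by simp
    ultimately show "y \<le> n - ?c0"
      by (simp add: diff_le_mono2)
  next
    have "affine_map n a0 0 \<in> affine_perms n"
      unfolding affine_perms_eq using a0 assms by blast
    then show "n - ?c0 \<in> t_class n ` affine_perms n"
      using t_class_affine_map[OF assms a0(2)] by (metis image_eqI)
  qed
  then show ?thesis
    using cyc_linear_map_Carmichael_root[OF a0(2,3)] cyc_le[of n] by (simp add: of_nat_diff)
qed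

section \<open>Summation over divisors\<close>

lemma sum_lessThan_div_gcd:
  fixes h :: "nat \<Rightarrow> 'a::semiring_1"
  assumes "0 < n"
  shows "(\<Sum>x<n. h (n div gcd x n)) = (\<Sum>d | d dvd n. of_nat (totient d) * h d)"
proof -
  have "(\<Sum>x<n. h (n div gcd x n)) = (\<Sum>x\<in>{0<..n}. h (n div gcd x n))"
    using assms
    by (intro sum.reindex_bij_witness[of _ "\<lambda>x. x mod n" "\<lambda>x. if x = 0 then n else x"])
       (auto simp: le_less)
  also have "\<dots> = (\<Sum>e | e dvd n. \<Sum>x | x \<in> {0<..n} \<and> gcd x n = e. h (n div gcd x n))"
    using assms by (intro sum.group[symmetric]) auto
  also have "\<dots> = (\<Sum>e | e dvd n. of_nat (totient (n div e)) * h (n div e))"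
    using assms by (intro sum.cong refl) (simp add: card_gcd_eq_totient[symmetric])
  also have "\<dots> = (\<Sum>d | d dvd n. of_nat (totient d) * h d)"
    using assms by (intro sum.reindex_bij_witness[of _ "(div) n" "(div) n"]) (auto elim: dvdE)
  finally show ?thesis .
qed

lemma bij_betw_exponents_divisors:
  fixes n :: nat
  assumes "0 < n"
  shows "bij_betw (\<lambda>m. \<Prod>p\<in>prime_factors n. p ^ m p)
    (\<Pi>\<^sub>E p\<in>prime_factors n. {0..multiplicity p n}) {d. d dvd n}"
proof (rule bij_betw_byWitness[where f' = "\<lambda>d. restrict (\<lambda>p. multiplicity p d) (prime_factors n)"])
  let ?P = "prime_factors n"
  have multiplicity_prod: "multiplicity q (\<Prod>p\<in>?P. p ^ m p) = (if q \<in> ?P then m q else 0)"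
    if "prime q" for q m
    using multiplicity_prod_prime_powers[of ?P q m, OF _ in_prime_factors_imp_prime that] by simp
  show "\<forall>m\<in>\<Pi>\<^sub>E p\<in>?P. {0..multiplicity p n}.
      restrict (\<lambda>p. multiplicity p (\<Prod>p\<in>?P. p ^ m p)) ?P = m"
    by (auto simp: multiplicity_prod PiE_def extensional_def fun_eq_iff in_prime_factors_iff)
  show "\<forall>d\<in>{d. d dvd n}. (\<Prod>p\<in>?P. p ^ restrict (\<lambda>p. multiplicity p d) ?P p) = d"
  proof
    fix d assume "d \<in> {d. d dvd n}"
    then have d: "d dvd n" "0 < d"
      using assms by (auto intro: dvd_pos_nat)
    have "prime_factors d \<subseteq> ?P"
      using d assms by (simp add: dvd_prime_factors)
    then have "(\<Prod>p\<in>?P. p ^ multiplicity p d) = (\<Prod>p\<in>prime_factors d. p ^ multiplicity p d)"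
      by (intro prod.mono_neutral_right) (auto simp: in_prime_factors_iff not_dvd_imp_multiplicity_0)
    then show "(\<Prod>p\<in>?P. p ^ restrict (\<lambda>p. multiplicity p d) ?P p) = d"
      using prime_factorization_nat[OF d(2)] by simp
  qed
  show "(\<lambda>m. \<Prod>p\<in>?P. p ^ m p) ` (\<Pi>\<^sub>E p\<in>?P. {0..multiplicity p n}) \<subseteq> {d. d dvd n}"
  proof clarify
    fix m assume m: "m \<in> (\<Pi>\<^sub>E p\<in>?P. {0..multiplicity p n})"
    show "(\<Prod>p\<in>?P. p ^ m p) dvd n"
    proof (rule multiplicity_le_imp_dvd)
      show "(\<Prod>p\<in>?P. p ^ m p) \<noteq> 0"
        by (auto simp: in_prime_factors_iff)
      show "multiplicity q (\<Prod>p\<in>?P. p ^ m p) \<le> multiplicity q n" if "prime q" for q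
        using m that by (auto simp: multiplicity_prod)
    qed
  qed
  show "(\<lambda>d. restrict (\<lambda>p. multiplicity p d) ?P) ` {d. d dvd n} \<subseteq>
      (\<Pi>\<^sub>E p\<in>?P. {0..multiplicity p n})"
    using assms by (auto intro!: dvd_imp_multiplicity_le)
qed

lemma totient_prod_pairwise_coprime:
  assumes "finite A" "\<And>i j. i \<in> A \<Longrightarrow> j \<in> A \<Longrightarrow> i \<noteq> j \<Longrightarrow> coprime (f i) (f j)"
  shows "totient (\<Prod>i\<in>A. f i) = (\<Prod>i\<in>A. totient (f i))"
  using assms by (induction A rule: finite_induct)
                 (simp, simp, subst totient_mult_coprime[OF prod_coprime_right], auto)

lemma Carmichael_prime_power_eq_lcm_entry:
  assumes "prime p"
  shows "Carmichael (p ^ m) = lcm_entry p m"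
proof (cases "m = 0")
  case False
  have "2 ^ (m - 1) div 2 = (2::nat) ^ (m - 2)" if "m \<ge> 3"
    using that by (simp add: power_diff)
  then show ?thesis
    using assms False
    by (auto simp: lcm_entry_def lambda2_def Carmichael_prime_power totient_prime_power)
qed (simp add: lcm_entry_def lambda2_def)

lemma sum_inverse_Carmichael_div_gcd:
  assumes "0 < n"
  shows "(\<Sum>x<n. 1 / real (Carmichael (n div gcd x n))) =
    (\<Sum>m \<in> (\<Pi>\<^sub>E p \<in> prime_factors n. {0..multiplicity p n}).
       real (\<Prod>p \<in> prime_factors n. totient (p ^ m p)) /
       real (Lcm ((\<lambda>p. lcm_entry p (m p)) ` prime_factors n)))"
proof -
  let ?P = "prime_factors n"
  have "(\<Sum>x<n. 1 / real (Carmichael (n div gcd x n))) = (\<Sum>d | d dvd n. real (totient d) / real (Carmichael d))"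
    using sum_lessThan_div_gcd[OF assms, of "\<lambda>d. 1 / real (Carmichael d)"] by simp
  also have "\<dots> = (\<Sum>m \<in> (\<Pi>\<^sub>E p \<in> ?P. {0..multiplicity p n}).
      real (totient (\<Prod>p\<in>?P. p ^ m p)) / real (Carmichael (\<Prod>p\<in>?P. p ^ m p)))"
    using sum.reindex_bij_betw[OF bij_betw_exponents_divisors[OF assms],
        of "\<lambda>d. real (totient d) / real (Carmichael d)"] by simp
  also have "\<dots> = (\<Sum>m \<in> (\<Pi>\<^sub>E p \<in> ?P. {0..multiplicity p n}).
       real (\<Prod>p \<in> ?P. totient (p ^ m p)) / real (Lcm ((\<lambda>p. lcm_entry p (m p)) ` ?P)))"
  proof (intro sum.cong refl)
    fix m :: "nat \<Rightarrow> nat"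
    have cop: "\<And>p q. p \<in> ?P \<Longrightarrow> q \<in> ?P \<Longrightarrow> p \<noteq> q \<Longrightarrow> coprime (p ^ m p) (q ^ m q)"
      using coprime_prime_powers in_prime_factors_imp_prime by blast
    have "(\<lambda>p. Carmichael (p ^ m p)) ` ?P = (\<lambda>p. lcm_entry p (m p)) ` ?P"
      using Carmichael_prime_power_eq_lcm_entry in_prime_factors_imp_prime by (intro image_cong) auto
    then show "real (totient (\<Prod>p\<in>?P. p ^ m p)) / real (Carmichael (\<Prod>p\<in>?P. p ^ m p)) =
        real (\<Prod>p \<in> ?P. totient (p ^ m p)) / real (Lcm ((\<lambda>p. lcm_entry p (m p)) ` ?P))"
      using totient_prod_pairwise_coprime[of ?P "\<lambda>p. p ^ m p", OF _ cop]
        Carmichael_prod_coprime[of ?P "\<lambda>p. p ^ m p", OF _ cop] by simp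
  qed
  finally show ?thesis .
qed

theorem theorem3p4:
  fixes n :: nat
  assumes "n > 0"
  shows "real (t_aff n) = real n -
    (\<Sum>m \<in> (\<Pi>\<^sub>E p \<in> prime_factors n. {0..multiplicity p n}).
       real (\<Prod>p \<in> prime_factors n. totient (p ^ m p)) /
       real (Lcm ((\<lambda>p. lcm_entry p (m p)) ` prime_factors n)))"
  using t_aff_eq_sum_inverse_Carmichael[OF assms] sum_inverse_Carmichael_div_gcd[OF assms] by simp

end
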